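(* For all $\lambda$-terms $A,B$: (1) If $A\to_{\beta''}B$ then $A\twoheadrightarrow_{\beta'}B$. (2) If $A\to_{\beta'}B$ then $A\twoheadrightarrow_{\beta''}B$.
   Context: Let $\mathcal V$ be an infinite set of variables enumerated in a fixed order $x,y,z,x',y',z',\dots$. $\lambda$-terms: $\mathcal M ::= \mathcal V \mid (\lambda\mathcal V.\mathcal M)\mid(\mathcal M\mathcal M)$; $=_{\mathcal M}$ is syntactic identity. $FV(C)$ is the set of variables with a free occurrence in $C$; $BV(C)$ the set of $v$ with $\lambda v$ occurring in $C$; $FV(vA)=\{v\}\cup FV(A)$, $FV(AB)=FV(A)\cup FV(B)$. A term $C$ is clean iff $BV(C)\cap FV(C)=\emptyset$ and each $\lambda v$ occurs at most once in $C$. Grafting $A\{v:=B\}$: $v\{v:=B\}=B$; $v'\{v:=B\}=v'$ if $v'\neq v$; $(AC)\{v:=B\}=A\{v:=B\}C\{v:=B\}$; $(\lambda v.A)\{v:=B\}=\lambda v.A$; $(\lambda v'.A)\{v:=B\}=\lambda v'.A\{v:=B\}$ if $v\neq v'$. Replacement $A\langle\langle v:=B\rangle\rangle$: $v\langle\langle v:=B\rangle\rangle=B$; $v'\langle\langle v:=B\rangle\rangle=v'$ if $v\neq v'$; $(AC)\langle\langle v:=B\rangle\rangle=A\langle\langle v:=B\rangle\rangle C\langle\langle v:=B\rangle\rangle$; $(\lambda v.A)\langle\langle v:=B\rangle\rangle=\lambda v.A$; $(\lambda v'.A)\langle\langle v:=B\rangle\rangle=\lambda v'.A\langle\langle v:=B\rangle\rangle$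 if $v\neq v'$ and ($v'\notin FV(B)$ or $v\notin FV(A)$); $(\lambda v'.A)\langle\langle v:=B\rangle\rangle=\lambda v''.A\langle\langle v':=v''\rangle\rangle\langle\langle v:=B\rangle\rangle$ if $v\neq v'$, $v'\in FV(B)$, $v\in FV(A)$, with $v''$ the first variable in the ordered list such that $v''\notin FV(AB)$. A relation is compatible if $A\,R\,B$ implies $(AC)R(BC)$, $(CA)R(CB)$, $(\lambda u.A)R(\lambda u.B)$. $\to_\alpha$: least compatible relation with $\lambda v.A\to_\alpha\lambda v'.A\langle\langle v:=v'\rangle\rangle$ for $v'\notin FV(A)$. $\to_{\alpha'}$: least compatible relation with $\lambda v.A\to_{\alpha'}\lambda v'.A\{v:=v'\}$ for $v'\notin FV(vA)$, $v,v'\notin BV(A)$; $\twoheadrightarrow_{\alpha'}$ its reflexive transitive closure. $\to_{\beta'}$: least compatible relation with $(\lambda v.A)B\to_{\beta'}A\langle\langle v:=B\rangle\rangle$; $\twoheadrightarrow_{\beta'}$ is the reflexive transitive closure of $\to_{\beta'}\cup\to_\alpha$. $\to_{\beta''}$: least compatible relation with $(\lambda v.A)B\to_{\beta''}A'\{v':=B'\}$ whenever $(\lambda v.A)B\twoheadrightarrow_{\alpha'}(\lambda v'.A')B'$ and $(\lambda v'.A')B'$ is clean; $\twoheadrightarrow_{\beta''}$ is the reflexive transitive closure of $\to_{\beta''}\cup\to_{\alpha'}$. *)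

theory Defs
  imports Main
begin

text \<open>Variables are natural numbers; the fixed enumeration x,y,z,x',... is 0,1,2,...\<close>
type_synonym var = nat

datatype lterm = Var var | Lam var lterm | App lterm lterm

fun FV :: "lterm \<Rightarrow> var set" where
  "FV (Var v) = {v}"
| "FV (Lam v A) = FV A - {v}"
| "FV (App A B) = FV A \<union> FV B"

fun BV :: "lterm \<Rightarrow> var set" where
  "BV (Var v) = {}"
| "BV (Lam v A) = insert v (BV A)"
| "BV (App A B) = BV A \<union> BV B"

fun binders :: "lterm \<Rightarrow> var list" where
  "binders (Var v) = []"
| "binders (Lam v A) = v # binders A"
| "binders (App A B) = binders A @ binders B"

definition clean :: "lterm \<Rightarrow> bool" where
  "clean C \<longleftrightarrow> BV C \<inter> FV C = {} \<and> distinct (binders C)"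

fun graft :: "lterm \<Rightarrow> var \<Rightarrow> lterm \<Rightarrow> lterm" where
  "graft (Var v') v B = (if v' = v then B else Var v')"
| "graft (App A C) v B = App (graft A v B) (graft C v B)"
| "graft (Lam v' A) v B = (if v' = v then Lam v' A else Lam v' (graft A v B))"

definition fresh :: "var set \<Rightarrow> var" where
  "fresh S = (LEAST v. v \<notin> S)"

function (domintros) repl :: "lterm \<Rightarrow> var \<Rightarrow> lterm \<Rightarrow> lterm" where
  "repl (Var v') v B = (if v' = v then B else Var v')"
| "repl (App A C) v B = App (repl A v B) (repl C v B)"
| "repl (Lam v' A) v B =
     (if v' = v then Lam v' A
      else if v' \<notin> FV B \<or> v \<notin> FV A then Lam v' (repl A v B)
      else (let v'' = fresh (FV (App A B)) in Lam v'' (repl (repl A v' (Var v'')) v B)))"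
  by pat_completeness auto

lemma repl_size: "repl_dom (A, v, Var w) \<Longrightarrow> size (repl A v (Var w)) = size A"
proof (induction A v "Var w" arbitrary: w rule: repl.pinduct)
  case (3 v' A v)
  then show ?case by (auto simp: repl.psimps Let_def)
qed (auto simp: repl.psimps)

termination repl
  by (relation "measure (\<lambda>(A, v, B). size A)") (auto simp: repl_size)

inductive compat :: "(lterm \<Rightarrow> lterm \<Rightarrow> bool) \<Rightarrow> lterm \<Rightarrow> lterm \<Rightarrow> bool" for R where
  base: "R A B \<Longrightarrow> compat R A B"
| appL: "compat R A B \<Longrightarrow> compat R (App A C) (App B C)"
| appR: "compat R A B \<Longrightarrow> compat R (App C A) (App C B)"
| lam: "compat R A B \<Longrightarrow> compat R (Lam u A) (Lam u B)"

definition alpha_base :: "lterm \<Rightarrow> lterm \<Rightarrow> bool" where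
  "alpha_base X Y \<longleftrightarrow> (\<exists>v v' A. X = Lam v A \<and> v' \<notin> FV A \<and> Y = Lam v' (repl A v (Var v')))"

definition alpha :: "lterm \<Rightarrow> lterm \<Rightarrow> bool" where
  "alpha = compat alpha_base"

definition alpha'_base :: "lterm \<Rightarrow> lterm \<Rightarrow> bool" where
  "alpha'_base X Y \<longleftrightarrow> (\<exists>v v' A. X = Lam v A \<and> v' \<notin> FV (App (Var v) A)
      \<and> v \<notin> BV A \<and> v' \<notin> BV A \<and> Y = Lam v' (graft A v (Var v')))"

definition alpha' :: "lterm \<Rightarrow> lterm \<Rightarrow> bool" where
  "alpha' = compat alpha'_base"

definition alpha'_star :: "lterm \<Rightarrow> lterm \<Rightarrow> bool" where
  "alpha'_star = alpha'\<^sup>*\<^sup>*"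

definition beta'_base :: "lterm \<Rightarrow> lterm \<Rightarrow> bool" where
  "beta'_base X Y \<longleftrightarrow> (\<exists>v A B. X = App (Lam v A) B \<and> Y = repl A v B)"

definition beta' :: "lterm \<Rightarrow> lterm \<Rightarrow> bool" where
  "beta' = compat beta'_base"

definition beta'_star :: "lterm \<Rightarrow> lterm \<Rightarrow> bool" where
  "beta'_star = (\<lambda>X Y. beta' X Y \<or> alpha X Y)\<^sup>*\<^sup>*"

definition beta''_base :: "lterm \<Rightarrow> lterm \<Rightarrow> bool" where
  "beta''_base X Y \<longleftrightarrow> (\<exists>v A B v' A' B'. X = App (Lam v A) B
      \<and> alpha'_star (App (Lam v A) B) (App (Lam v' A') B')
      \<and> clean (App (Lam v' A') B') \<and> Y = graft A' v' B')"

definition beta'' :: "lterm \<Rightarrow> lterm \<Rightarrow> bool" where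
  "beta'' = compat beta''_base"

definition beta''_star :: "lterm \<Rightarrow> lterm \<Rightarrow> bool" where
  "beta''_star = (\<lambda>X Y. beta'' X Y \<or> alpha' X Y)\<^sup>*\<^sup>*"

end

theory Submission
  imports Defs
begin

(* Part (1): when a binder is renamed without capture, or when the redex is clean, grafting
   coincides with replacement; so an alpha'-step is an alpha-step and a beta''-step is a series
   of alpha-steps followed by a beta'-step.

   Part (2): interpret named terms as locally nameless terms. Replacement is interpreted as
   substitution, whatever renaming it performs, and alpha'-steps do not change the
   interpretation. Conversely every term is alpha'-convertible to a canonical named term built
   from its interpretation with fresh, pairwise distinct binders, so terms with equal
   interpretations are alpha'-convertible. A beta'-redex is therefore alpha'-convertible to a
   clean redex whose beta''-contractum has the interpretation of the beta'-contractum. *)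

lemma rtranclp_map:
  assumes "r\<^sup>*\<^sup>* x y" and "\<And>x y. r x y \<Longrightarrow> s (f x) (f y)"
  shows "s\<^sup>*\<^sup>* (f x) (f y)"
  using assms(1) by induction (auto intro: rtranclp.rtrancl_into_rtrancl assms(2))

lemma compat_mono: "compat R X Y \<Longrightarrow> (\<And>X Y. R X Y \<Longrightarrow> S X Y) \<Longrightarrow> compat S X Y"
  by (induction rule: compat.induct) (auto intro: compat.intros)

lemma compat_sym: "compat R X Y \<Longrightarrow> (\<And>X Y. R X Y \<Longrightarrow> R Y X) \<Longrightarrow> compat R Y X"
  by (induction rule: compat.induct) (auto intro: compat.intros)

lemma compat_into_rtranclp:
  assumes "compat R X Y"
    and "\<And>X Y. R X Y \<Longrightarrow> S\<^sup>*\<^sup>* X Y"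
    and "\<And>X Y C. S X Y \<Longrightarrow> S (App X C) (App Y C)"
    and "\<And>X Y C. S X Y \<Longrightarrow> S (App C X) (App C Y)"
    and "\<And>X Y u. S X Y \<Longrightarrow> S (Lam u X) (Lam u Y)"
  shows "S\<^sup>*\<^sup>* X Y"
  using assms(1)
proof induction
  case (base X Y)
  then show ?case by (rule assms(2))
next
  case (appL X Y C)
  show ?case by (rule rtranclp_map[where f = "\<lambda>X. App X C" and s = S, OF appL.IH assms(3)])
next
  case (appR X Y C)
  show ?case by (rule rtranclp_map[where f = "App C" and s = S, OF appR.IH assms(4)])
next
  case (lam X Y u)
  show ?case by (rule rtranclp_map[where f = "Lam u" and s = S, OF lam.IH assms(5)])
qed

lemma finite_FV: "finite (FV A)"
  by (induction A) auto

lemma finite_BV: "finite (BV A)"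
  by (induction A) auto

lemma set_binders: "set (binders A) = BV A"
  by (induction A) auto

lemma fresh_notin: "finite S \<Longrightarrow> fresh S \<notin> S"
  unfolding fresh_def by (rule LeastI_ex) (meson ex_new_if_finite infinite_UNIV_nat)

lemma repl_triv: "v \<notin> FV A \<Longrightarrow> repl A v B = A"
  by (induction A v B rule: repl.induct) auto

lemma graft_eq_repl: "BV A \<inter> FV B = {} \<Longrightarrow> graft A v B = repl A v B"
  by (induction A) auto

lemma graft_triv: "v \<notin> FV A \<Longrightarrow> graft A v B = A"
  by (induction A) auto

lemma BV_graft_Var: "BV (graft A v (Var w)) = BV A"
  by (induction A) auto

lemma notin_FV_graft_Var: "w \<noteq> v \<Longrightarrow> v \<notin> FV (graft A v (Var w))"
  by (induction A) auto

lemma graft_Var_inverse: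
  "v' \<notin> FV A \<Longrightarrow> v' \<notin> BV A \<Longrightarrow> graft (graft A v (Var v')) v' (Var v) = A"
  by (induction A) (auto simp: graft_triv)

lemma alpha'_baseE:
  assumes "alpha'_base X Y"
  obtains v v' A where "X = Lam v A" "Y = Lam v' (graft A v (Var v'))"
    and "v' \<noteq> v" "v' \<notin> FV A" "v \<notin> BV A" "v' \<notin> BV A"
  using assms unfolding alpha'_base_def by auto

lemma alpha'_into_alpha: "alpha' X Y \<Longrightarrow> alpha X Y"
  unfolding alpha'_def alpha_def
proof (erule compat_mono)
  fix X Y assume "alpha'_base X Y"
  then obtain v v' A where "X = Lam v A" "Y = Lam v' (graft A v (Var v'))"
    and "v' \<noteq> v" "v' \<notin> FV A" "v' \<notin> BV A"
    by (rule alpha'_baseE)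
  then show "alpha_base X Y"
    unfolding alpha_base_def by (auto simp: graft_eq_repl)
qed

lemma alpha'_base_sym: "alpha'_base X Y \<Longrightarrow> alpha'_base Y X"
proof (elim alpha'_baseE)
  fix v v' A
  assume X: "X = Lam v A" and Y: "Y = Lam v' (graft A v (Var v'))"
    and fresh: "v' \<noteq> v" "v' \<notin> FV A" "v \<notin> BV A" "v' \<notin> BV A"
  have "v \<notin> FV (graft A v (Var v'))" using fresh(1) by (rule notin_FV_graft_Var)
  then show "alpha'_base Y X"
    unfolding alpha'_base_def X Y using fresh
    by (intro exI[of _ v'] exI[of _ v] exI[of _ "graft A v (Var v')"])
      (simp add: BV_graft_Var graft_Var_inverse)
qed

lemma alpha'_star_sym: "alpha'_star X Y \<Longrightarrow> alpha'_star Y X"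
  unfolding alpha'_star_def
proof (induction rule: rtranclp_induct)
  case (step Y Z)
  have "alpha' Z Y"
    using step(2) unfolding alpha'_def by (rule compat_sym) (rule alpha'_base_sym)
  then show ?case using step(3) by (rule converse_rtranclp_into_rtranclp)
qed simp

lemma alpha'_star_Lam: "alpha'_star A B \<Longrightarrow> alpha'_star (Lam u A) (Lam u B)"
  unfolding alpha'_star_def alpha'_def by (erule rtranclp_map) (rule compat.lam)

lemma alpha'_star_App:
  assumes "alpha'_star A B" and "alpha'_star C D"
  shows "alpha'_star (App A C) (App B D)"
proof -
  have "alpha'\<^sup>*\<^sup>* (App A C) (App B C)"
    using assms(1) unfolding alpha'_star_def alpha'_def
    by (rule rtranclp_map[where f = "\<lambda>X. App X C"]) (rule compat.appL)
  also have "alpha'\<^sup>*\<^sup>* (App B C) (App B D)"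
    using assms(2) unfolding alpha'_star_def alpha'_def
    by (rule rtranclp_map[where f = "App B"]) (rule compat.appR)
  finally show ?thesis unfolding alpha'_star_def .
qed

section \<open>Locally nameless interpretation\<close>

datatype dterm = Fr var | Bd nat | DLam dterm | DApp dterm dterm

fun lift :: "nat \<Rightarrow> dterm \<Rightarrow> dterm" where
  "lift k (Fr x) = Fr x"
| "lift k (Bd i) = (if i < k then Bd i else Bd (Suc i))"
| "lift k (DLam t) = DLam (lift (Suc k) t)"
| "lift k (DApp s t) = DApp (lift k s) (lift k t)"

fun closeat :: "nat \<Rightarrow> var \<Rightarrow> dterm \<Rightarrow> dterm" where
  "closeat j v (Fr x) = (if x = v then Bd j else Fr x)"
| "closeat j v (Bd i) = Bd i"
| "closeat j v (DLam t) = DLam (closeat (Suc j) v t)"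
| "closeat j v (DApp s t) = DApp (closeat j v s) (closeat j v t)"

fun openat :: "nat \<Rightarrow> dterm \<Rightarrow> dterm \<Rightarrow> dterm" where
  "openat j N (Fr x) = Fr x"
| "openat j N (Bd i) = (if i = j then N else Bd i)"
| "openat j N (DLam t) = DLam (openat (Suc j) N t)"
| "openat j N (DApp s t) = DApp (openat j N s) (openat j N t)"

fun locally_closed :: "nat \<Rightarrow> dterm \<Rightarrow> bool" where
  "locally_closed k (Fr x) = True"
| "locally_closed k (Bd i) = (i < k)"
| "locally_closed k (DLam t) = locally_closed (Suc k) t"
| "locally_closed k (DApp s t) = (locally_closed k s \<and> locally_closed k t)"

fun frees :: "dterm \<Rightarrow> var set" where
  "frees (Fr x) = {x}"
| "frees (Bd i) = {}"
| "frees (DLam t) = frees t"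
| "frees (DApp s t) = frees s \<union> frees t"

fun nbinders :: "dterm \<Rightarrow> nat" where
  "nbinders (Fr x) = 0"
| "nbinders (Bd i) = 0"
| "nbinders (DLam t) = Suc (nbinders t)"
| "nbinders (DApp s t) = nbinders s + nbinders t"

text \<open>The environment \<open>\<rho>\<close> gives the interpretation of the free variables; under a binder it is
  shifted, so \<open>nameless Fr\<close> is the usual locally nameless representation.\<close>
fun nameless :: "(var \<Rightarrow> dterm) \<Rightarrow> lterm \<Rightarrow> dterm" where
  "nameless \<rho> (Var x) = \<rho> x"
| "nameless \<rho> (Lam v A) = DLam (nameless ((lift 0 \<circ> \<rho>)(v := Bd 0)) A)"
| "nameless \<rho> (App A B) = DApp (nameless \<rho> A) (nameless \<rho> B)"

lemma nameless_cong: "(\<And>z. z \<in> FV A \<Longrightarrow> \<rho> z = \<rho>' z) \<Longrightarrow> nameless \<rho> A = nameless \<rho>' A"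
proof (induction A arbitrary: \<rho> \<rho>')
  case (Lam v A)
  have "nameless ((lift 0 \<circ> \<rho>)(v := Bd 0)) A = nameless ((lift 0 \<circ> \<rho>')(v := Bd 0)) A"
    by (rule Lam.IH) (use Lam.prems in simp)
  then show ?case by (simp only: nameless.simps)
next
  case (App A B)
  have "nameless \<rho> A = nameless \<rho>' A" by (rule App.IH(1)) (use App.prems in simp)
  moreover have "nameless \<rho> B = nameless \<rho>' B" by (rule App.IH(2)) (use App.prems in simp)
  ultimately show ?case by (simp only: nameless.simps)
qed simp

lemma lift_lift: "j \<le> k \<Longrightarrow> lift (Suc k) (lift j t) = lift j (lift k t)"
  by (induction t arbitrary: j k) auto

lemma lift_closeat: "k \<le> j \<Longrightarrow> lift k (closeat j v t) = closeat (Suc j) v (lift k t)"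
  by (induction t arbitrary: k j) auto

lemma lift_locally_closed: "locally_closed m t \<Longrightarrow> m \<le> k \<Longrightarrow> lift k t = t"
  by (induction t arbitrary: m k) auto

lemma lift_openat:
  "k \<le> j \<Longrightarrow> locally_closed 0 N \<Longrightarrow> lift k (openat j N t) = openat (Suc j) N (lift k t)"
  by (induction t arbitrary: k j) (auto simp: lift_locally_closed)

lemma nameless_lift: "nameless (lift k \<circ> \<rho>) A = lift k (nameless \<rho> A)"
proof (induction A arbitrary: k \<rho>)
  case (Lam v A)
  have shift:
    "(lift 0 \<circ> (lift k \<circ> \<rho>))(v := Bd 0) = lift (Suc k) \<circ> ((lift 0 \<circ> \<rho>)(v := Bd 0))"
    by (auto simp: fun_eq_iff lift_lift)
  show ?case by (simp only: nameless.simps lift.simps shift Lam.IH)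
qed auto

lemma nameless_closeat: "nameless (closeat j v \<circ> \<rho>) A = closeat j v (nameless \<rho> A)"
proof (induction A arbitrary: j \<rho>)
  case (Lam w A)
  have shift:
    "(lift 0 \<circ> (closeat j v \<circ> \<rho>))(w := Bd 0) = closeat (Suc j) v \<circ> ((lift 0 \<circ> \<rho>)(w := Bd 0))"
    by (auto simp: fun_eq_iff lift_closeat)
  show ?case by (simp only: nameless.simps closeat.simps shift Lam.IH)
qed auto

lemma nameless_openat:
  "locally_closed 0 N \<Longrightarrow> nameless (openat j N \<circ> \<rho>) A = openat j N (nameless \<rho> A)"
proof (induction A arbitrary: j \<rho>)
  case (Lam w A)
  have shift:
    "(lift 0 \<circ> (openat j N \<circ> \<rho>))(w := Bd 0) = openat (Suc j) N \<circ> ((lift 0 \<circ> \<rho>)(w := Bd 0))"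
    using Lam.prems by (auto simp: fun_eq_iff lift_openat)
  show ?case by (simp only: nameless.simps openat.simps shift Lam.IH[OF Lam.prems])
qed auto

lemma lift_comp_Fr [simp]: "lift k \<circ> Fr = Fr"
  by (auto simp: fun_eq_iff)

lemma nameless_Fr_Lam: "nameless Fr (Lam v A) = DLam (nameless (Fr(v := Bd 0)) A)"
  by simp

lemma nameless_Fr_close: "nameless (Fr(v := Bd 0)) A = closeat 0 v (nameless Fr A)"
proof -
  have "closeat 0 v \<circ> Fr = Fr(v := Bd 0)" by (auto simp: fun_eq_iff)
  then show ?thesis using nameless_closeat[of 0 v Fr A] by simp
qed

lemma nameless_Fr_open:
  "locally_closed 0 N \<Longrightarrow> nameless (Fr(x := N)) A = openat 0 N (nameless (Fr(x := Bd 0)) A)"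
proof -
  assume N: "locally_closed 0 N"
  have "openat 0 N \<circ> Fr(x := Bd 0) = Fr(x := N)" by (auto simp: fun_eq_iff)
  then show ?thesis using nameless_openat[OF N, of 0 "Fr(x := Bd 0)" A] by simp
qed

lemma locally_closed_lift: "locally_closed k t \<Longrightarrow> locally_closed (Suc k) (lift j t)"
  by (induction t arbitrary: k j) auto

lemma locally_closed_nameless:
  "(\<And>z. locally_closed k (\<rho> z)) \<Longrightarrow> locally_closed k (nameless \<rho> A)"
proof (induction A arbitrary: k \<rho>)
  case (Lam v A)
  have "locally_closed (Suc k) (nameless ((lift 0 \<circ> \<rho>)(v := Bd 0)) A)"
    by (rule Lam.IH) (use Lam.prems locally_closed_lift in auto)
  then show ?case by simp
qed auto

lemma locally_closed_nameless_Fr: "locally_closed 0 (nameless Fr A)"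
  by (rule locally_closed_nameless) simp

lemma frees_lift: "frees (lift k t) = frees t"
  by (induction t arbitrary: k) auto

lemma frees_nameless: "frees (nameless \<rho> A) \<subseteq> (\<Union>z\<in>FV A. frees (\<rho> z))"
proof (induction A arbitrary: \<rho>)
  case (Lam v A)
  have "frees (nameless ((lift 0 \<circ> \<rho>)(v := Bd 0)) A)
      \<subseteq> (\<Union>z\<in>FV A. frees (((lift 0 \<circ> \<rho>)(v := Bd 0)) z))"
    by (rule Lam.IH)
  also have "\<dots> \<subseteq> (\<Union>z\<in>FV (Lam v A). frees (\<rho> z))"
    by (auto simp: frees_lift split: if_splits)
  finally show ?case by simp
next
  case (App A B)
  show ?case using App.IH[of \<rho>] by auto
qed auto

lemma frees_nameless_Fr: "frees (nameless Fr A) \<subseteq> FV A"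
  using frees_nameless[of Fr A] by auto

lemma nameless_under_binder:
  "w \<notin> FV B \<Longrightarrow> nameless ((lift 0 \<circ> \<rho>)(w := Bd 0)) B = lift 0 (nameless \<rho> B)"
  by (metis fun_upd_other nameless_cong nameless_lift)

lemma nameless_repl: "nameless \<rho> (repl A v B) = nameless (\<rho>(v := nameless \<rho> B)) A"
proof (induction A v B arbitrary: \<rho> rule: repl.induct)
  case (3 v' A v B)
  consider "v' = v" | "v \<notin> FV (Lam v' A)" | "v' \<noteq> v" "v \<in> FV A" "v' \<notin> FV B"
    | "v' \<noteq> v" "v \<in> FV A" "v' \<in> FV B"
    by auto
  then show ?case
  proof cases
    case 1
    then show ?thesis by simp (rule nameless_cong, auto)
  next
    case 2
    then have "repl (Lam v' A) v B = Lam v' A" by (rule repl_triv)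
    with 2 show ?thesis by (auto intro: nameless_cong)
  next
    case 3
    have r: "repl (Lam v' A) v B = Lam v' (repl A v B)" using 3 by simp
    have IH: "nameless \<rho>' (repl A v B) = nameless (\<rho>'(v := nameless \<rho>' B)) A" for \<rho>'
      using "3.IH"(1) 3 by blast
    have env: "((lift 0 \<circ> \<rho>)(v' := Bd 0))(v := lift 0 (nameless \<rho> B))
        = (lift 0 \<circ> \<rho>(v := nameless \<rho> B))(v' := Bd 0)"
      using 3 by (auto simp: fun_eq_iff)
    show ?thesis unfolding r nameless.simps IH nameless_under_binder[OF \<open>v' \<notin> FV B\<close>] env ..
  next
    case 4
    define w where "w = fresh (FV (App A B))"
    have w: "w \<notin> FV A" "w \<notin> FV B"
      using fresh_notin[OF finite_FV, of "App A B"] by (auto simp: w_def)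
    let ?\<rho>w = "(lift 0 \<circ> \<rho>)(w := Bd 0)"
    let ?\<rho>v = "?\<rho>w(v := nameless ?\<rho>w B)"
    have r: "repl (Lam v' A) v B = Lam w (repl (repl A v' (Var w)) v B)"
      using 4 by (simp add: Let_def w_def)
    have "nameless ?\<rho>w (repl (repl A v' (Var w)) v B) = nameless ?\<rho>v (repl A v' (Var w))"
      by (rule "3.IH"(3)[of w]) (use 4 in \<open>auto simp: w_def\<close>)
    also have "\<dots> = nameless (?\<rho>v(v' := nameless ?\<rho>v (Var w))) A"
      by (rule "3.IH"(2)[of w]) (use 4 in \<open>auto simp: w_def\<close>)
    also have "\<dots> = nameless ((lift 0 \<circ> \<rho>(v := nameless \<rho> B))(v' := Bd 0)) A"
      using 4 w nameless_under_binder[OF w(2), of \<rho>] by (intro nameless_cong) auto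
    finally have body: "nameless ?\<rho>w (repl (repl A v' (Var w)) v B)
      = nameless ((lift 0 \<circ> \<rho>(v := nameless \<rho> B))(v' := Bd 0)) A" .
    show ?thesis unfolding r nameless.simps body ..
  qed
qed auto

lemma nameless_Fr_repl:
  "nameless Fr (repl A v B) = openat 0 (nameless Fr B) (nameless (Fr(v := Bd 0)) A)"
  by (simp add: nameless_repl nameless_Fr_open locally_closed_nameless_Fr)

lemma nameless_repl_eq:
  assumes "nameless Fr (App (Lam v A) B) = nameless Fr (App (Lam v' A') B')"
  shows "nameless Fr (repl A v B) = nameless Fr (repl A' v' B')"
  using assms by (simp add: nameless_Fr_repl nameless_Fr_Lam)

lemma nameless_alpha'_base: "alpha'_base X Y \<Longrightarrow> nameless \<rho> X = nameless \<rho> Y"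
proof (elim alpha'_baseE)
  fix v v' A
  assume X: "X = Lam v A" and Y: "Y = Lam v' (graft A v (Var v'))"
    and fresh: "v' \<noteq> v" "v' \<notin> FV A" "v' \<notin> BV A"
  let ?\<rho>' = "(lift 0 \<circ> \<rho>)(v' := Bd 0)"
  have "nameless ?\<rho>' (graft A v (Var v')) = nameless (?\<rho>'(v := Bd 0)) A"
    using fresh by (simp add: graft_eq_repl nameless_repl)
  also have "\<dots> = nameless ((lift 0 \<circ> \<rho>)(v := Bd 0)) A"
    by (rule nameless_cong) (use fresh in auto)
  finally show "nameless \<rho> X = nameless \<rho> Y" by (simp add: X Y)
qed

lemma nameless_compat:
  "compat R X Y \<Longrightarrow> (\<And>X Y \<rho>. R X Y \<Longrightarrow> nameless \<rho> X = nameless \<rho> Y) \<Longrightarrow>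
   nameless \<rho> X = nameless \<rho> Y"
  by (induction arbitrary: \<rho> rule: compat.induct) auto

lemma nameless_alpha'_star: "alpha'_star X Y \<Longrightarrow> nameless \<rho> X = nameless \<rho> Y"
  unfolding alpha'_star_def alpha'_def
  by (induction rule: rtranclp_induct) (auto dest: nameless_compat[OF _ nameless_alpha'_base])

section \<open>Canonical named representatives\<close>

text \<open>\<open>named b q env t\<close> names the binders of \<open>t\<close>, from left to right, \<open>b + q\<close>, \<open>b + q + 1\<close>, \<dots>;
  \<open>env\<close> lists the names of the enclosing binders, innermost first.\<close>
fun named :: "nat \<Rightarrow> nat \<Rightarrow> var list \<Rightarrow> dterm \<Rightarrow> lterm" where
  "named b q env (Fr x) = Var x"
| "named b q env (Bd i) = Var (env ! i)"
| "named b q env (DLam t) = Lam (b + q) (named b (Suc q) ((b + q) # env) t)"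
| "named b q env (DApp s t) = App (named b q env s) (named b (q + nbinders s) env t)"

lemma FV_named:
  "locally_closed (length env) t \<Longrightarrow> FV (named b q env t) \<subseteq> frees t \<union> set env"
proof (induction t arbitrary: q env)
  case (DLam t)
  have "FV (named b (Suc q) ((b + q) # env) t) \<subseteq> frees t \<union> set ((b + q) # env)"
    by (rule DLam.IH) (use DLam.prems in simp)
  then show ?case by auto
next
  case (DApp s t)
  have "FV (named b q env s) \<subseteq> frees s \<union> set env"
    by (rule DApp.IH(1)) (use DApp.prems in simp)
  moreover have "FV (named b (q + nbinders s) env t) \<subseteq> frees t \<union> set env"
    by (rule DApp.IH(2)) (use DApp.prems in simp)
  ultimately show ?case by auto
qed auto

lemma BV_named: "BV (named b q env t) \<subseteq> {b + q ..< b + q + nbinders t}"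
  by (induction t arbitrary: q env) fastforce+

lemma distinct_binders_named: "distinct (binders (named b q env t))"
proof (induction t arbitrary: q env)
  case (DLam t)
  then show ?case using BV_named[of b "Suc q" "(b + q) # env" t] by (auto simp: set_binders)
next
  case (DApp s t)
  then show ?case using BV_named[of b q env s] BV_named[of b "q + nbinders s" env t]
    by (fastforce simp: set_binders)
qed auto

lemma clean_named:
  assumes "locally_closed 0 t" and "\<And>x. x \<in> frees t \<Longrightarrow> x < b"
  shows "clean (named b 0 [] t)"
proof -
  have "FV (named b 0 [] t) \<subseteq> {..<b}" using FV_named[of "[]" t b 0] assms by auto
  moreover have "BV (named b 0 [] t) \<subseteq> {b..}" using BV_named[of b 0 "[]" t] by auto
  ultimately show ?thesis unfolding clean_def using distinct_binders_named by fastforce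
qed

lemma nbinders_closeat: "nbinders (closeat j v t) = nbinders t"
  by (induction t arbitrary: j) auto

lemma graft_named:
  "locally_closed (length env) t \<Longrightarrow> v \<notin> set env \<Longrightarrow> v < b \<Longrightarrow>
   graft (named b q env t) v (Var w) = named b q (env @ [w]) (closeat (length env) v t)"
proof (induction t arbitrary: q env)
  case (Bd i)
  then have "env ! i \<noteq> v" using nth_mem by fastforce
  then show ?case using Bd by (simp add: nth_append)
qed (auto simp: nbinders_closeat)

lemma alpha'_star_named:
  "(\<And>x. x \<in> FV M \<union> BV M \<Longrightarrow> x < b) \<Longrightarrow> alpha'_star M (named b q [] (nameless Fr M))"
proof (induction M arbitrary: q)
  case (Var x)
  then show ?case by (simp add: alpha'_star_def)
next
  case (App A B)
  have "alpha'_star A (named b q [] (nameless Fr A))"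
    by (rule App.IH(1)) (use App.prems in auto)
  moreover have "alpha'_star B (named b (q + nbinders (nameless Fr A)) [] (nameless Fr B))"
    by (rule App.IH(2)) (use App.prems in auto)
  ultimately show ?case by (simp add: alpha'_star_App)
next
  case (Lam v A)
  txt \<open>Canonicalise the body first; renaming \<open>v\<close> to \<open>b + q\<close> is then an \<open>alpha'\<close>-step, as the
    binders of the body are above \<open>b + q\<close> and its free variables below \<open>b\<close>.\<close>
  define A1 where "A1 = named b (Suc q) [] (nameless Fr A)"
  have v: "v < b" using Lam.prems by auto
  have FV_A: "\<And>x. x \<in> FV A \<Longrightarrow> x < b" using Lam.prems v by (cases "x = v") auto
  have "alpha'_star A A1" unfolding A1_def by (rule Lam.IH) (use Lam.prems FV_A in auto)
  then have "alpha'_star (Lam v A) (Lam v A1)" by (rule alpha'_star_Lam)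
  moreover have "FV A1 \<subseteq> FV A"
    using FV_named[of "[]" "nameless Fr A" b "Suc q"] locally_closed_nameless_Fr[of A]
      frees_nameless_Fr[of A]
    unfolding A1_def by auto
  moreover have "BV A1 \<subseteq> {b + Suc q ..< b + Suc q + nbinders (nameless Fr A)}"
    unfolding A1_def by (rule BV_named)
  ultimately have "alpha'_base (Lam v A1) (Lam (b + q) (graft A1 v (Var (b + q))))"
    unfolding alpha'_base_def using v FV_A
    by (intro exI[of _ v] exI[of _ "b + q"] exI[of _ A1]) fastforce
  then have "alpha' (Lam v A1) (Lam (b + q) (graft A1 v (Var (b + q))))"
    unfolding alpha'_def by (rule compat.base)
  with \<open>alpha'_star (Lam v A) (Lam v A1)\<close>
  have "alpha'_star (Lam v A) (Lam (b + q) (graft A1 v (Var (b + q))))"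
    unfolding alpha'_star_def by (rule rtranclp.rtrancl_into_rtrancl)
  moreover have "graft A1 v (Var (b + q)) = named b (Suc q) [b + q] (closeat 0 v (nameless Fr A))"
    unfolding A1_def using graft_named[of "[]" "nameless Fr A" v b "Suc q"] locally_closed_nameless_Fr v
    by simp
  ultimately show ?case by (simp add: nameless_Fr_Lam nameless_Fr_close)
qed

lemma ex_bound_vars: "\<exists>b::var. \<forall>x \<in> FV M \<union> BV M. x < b"
  using finite_nat_set_iff_bounded[of "FV M \<union> BV M"] by (simp add: finite_FV finite_BV)

lemma alpha'_star_if_nameless_eq: "nameless Fr M = nameless Fr N \<Longrightarrow> alpha'_star M N"
proof -
  assume eq: "nameless Fr M = nameless Fr N"
  obtain b where b: "\<forall>x \<in> FV (App M N) \<union> BV (App M N). x < b" using ex_bound_vars by blast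
  have "alpha'_star M (named b 0 [] (nameless Fr M))"
    by (rule alpha'_star_named) (use b in auto)
  moreover have "alpha'_star N (named b 0 [] (nameless Fr N))"
    by (rule alpha'_star_named) (use b in auto)
  ultimately show ?thesis
    using eq alpha'_star_sym unfolding alpha'_star_def by (metis rtranclp_trans)
qed

lemma beta''_base_into_beta'_star: "beta''_base X Y \<Longrightarrow> beta'_star X Y"
proof -
  assume "beta''_base X Y"
  then obtain v A B v' A' B' where X: "X = App (Lam v A) B"
    and renamed: "alpha'_star X (App (Lam v' A') B')"
    and clean: "clean (App (Lam v' A') B')" and Y: "Y = graft A' v' B'"
    unfolding beta''_base_def by blast
  have "beta'_star X (App (Lam v' A') B')"
    using renamed unfolding alpha'_star_def beta'_star_def
    by (rule rtranclp_mono[THEN predicate2D, rotated]) (auto simp: alpha'_into_alpha)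
  moreover have "Y = repl A' v' B'"
    using clean unfolding Y clean_def by (auto intro: graft_eq_repl)
  then have "beta' (App (Lam v' A') B') Y"
    unfolding beta'_def beta'_base_def by (auto intro: compat.base)
  ultimately show ?thesis unfolding beta'_star_def by (simp add: rtranclp.rtrancl_into_rtrancl)
qed

lemma beta'_base_into_beta''_star: "beta'_base X Y \<Longrightarrow> beta''_star X Y"
proof -
  assume "beta'_base X Y"
  then obtain v A B where X: "X = App (Lam v A) B" and Y: "Y = repl A v B"
    unfolding beta'_base_def by blast
  obtain b where b: "\<forall>x \<in> FV X \<union> BV X. x < b" using ex_bound_vars by blast
  define C where "C = named b 0 [] (nameless Fr X)"
  have XC: "alpha'_star X C" unfolding C_def by (rule alpha'_star_named) (use b in auto)
  have "clean C"
    unfolding C_def using b frees_nameless_Fr[of X]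
    by (intro clean_named locally_closed_nameless_Fr) auto
  obtain A' B' where C: "C = App (Lam b A') B'"
    unfolding C_def X by (simp add: nameless_Fr_Lam)
  have "beta''_star X (graft A' b B')"
    using X XC \<open>clean C\<close> C unfolding beta''_star_def beta''_def beta''_base_def
    by (blast intro: compat.base)
  moreover have "graft A' b B' = repl A' b B'"
    using \<open>clean C\<close> unfolding C clean_def by (auto intro: graft_eq_repl)
  moreover have "nameless Fr (App (Lam b A') B') = nameless Fr (App (Lam v A) B)"
    using nameless_alpha'_star[OF XC, of Fr] unfolding X C by (rule sym)
  then have "alpha'_star (repl A' b B') Y"
    unfolding Y by (intro alpha'_star_if_nameless_eq nameless_repl_eq)
  then have "beta''_star (repl A' b B') Y"
    unfolding alpha'_star_def beta''_star_def by (rule rtranclp_mono[THEN predicate2D, rotated]) auto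
  ultimately show ?thesis unfolding beta''_star_def by simp
qed

lemma beta''_into_beta'_star: "beta'' X Y \<Longrightarrow> beta'_star X Y"
  unfolding beta''_def beta'_star_def
proof (erule compat_into_rtranclp)
  show "\<And>X Y. beta''_base X Y \<Longrightarrow> (\<lambda>X Y. beta' X Y \<or> alpha X Y)\<^sup>*\<^sup>* X Y"
    by (rule beta''_base_into_beta'_star[unfolded beta'_star_def])
qed (auto simp: beta'_def alpha_def intro: compat.intros)

lemma beta'_into_beta''_star: "beta' X Y \<Longrightarrow> beta''_star X Y"
  unfolding beta'_def beta''_star_def
proof (erule compat_into_rtranclp)
  show "\<And>X Y. beta'_base X Y \<Longrightarrow> (\<lambda>X Y. beta'' X Y \<or> alpha' X Y)\<^sup>*\<^sup>* X Y"
    by (rule beta'_base_into_beta''_star[unfolded beta''_star_def])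
qed (auto simp: beta''_def alpha'_def intro: compat.intros)

theorem lemma5p8:
  shows "(\<forall>A B. beta'' A B \<longrightarrow> beta'_star A B) \<and> (\<forall>A B. beta' A B \<longrightarrow> beta''_star A B)"
  using beta''_into_beta'_star beta'_into_beta''_star by blast

end
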